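(* For every positive integer $p$, $$-2\sum_{n=0}^{\infty}\frac{\zeta(2n)}{(2n+p)\,2^{2n}}=\log 2+\sum_{k=1}^{\lfloor p/2\rfloor}\frac{p!\,(-1)^k(4^k-1)\,\zeta(2k+1)}{(p-2k)!\,(2\pi)^{2k}}+\delta_{\lfloor p/2\rfloor,\,p/2}\,\frac{p!\,(-1)^{p/2}\,\zeta(p+1)}{\pi^p},$$ where $\delta_{\lfloor p/2\rfloor,p/2}$ equals $1$ if $p$ is even and $0$ if $p$ is odd.
   Context: $\zeta$ denotes the Riemann zeta function; in the $n=0$ term of the series, $\zeta(0)=-\tfrac12$ (value of the analytic continuation). An empty sum (when $\lfloor p/2\rfloor=0$) is $0$. *)

theory Defs
  imports "HOL-Analysis.Analysis"
begin

text \<open>Riemann zeta at nonnegative integer arguments, as used in the statement: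
  zeta 0 = -1/2 (value of the analytic continuation), and for s >= 2 the
  convergent Dirichlet series. The value at s = 1 (a pole) is never used.\<close>
definition zeta_nat :: "nat \<Rightarrow> real" where
  "zeta_nat s = (if s = 0 then - 1 / 2 else (\<Sum>m. 1 / (real (Suc m)) ^ s))"

end

(*
  Write S for the series on the left. The partial fraction
    1 / ((2n + p) 4^n) = (1 / (n 4^n) - p 2^p (1/2)^(2n+p) / (n (2n + p))) / 2     (n >= 1)
  splits S into the value at x = 1/2 of -ln (sin (pi x) / (pi x)) = sum_n zeta (2n) x^(2n) / n
  (logarithm of the sine product) and the integral B of x^(p-1) times that series over [0, 1/2].
  Since -ln (sin (pi x) / (pi x)) = ln (2 pi x) - ln (2 sin (pi x)), B is an elementary integral
  minus K, the integral of x^(p-1) ln (2 sin (pi x)). The Fourier series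
  ln (2 sin (pi x)) = - sum_n cos (2 pi n x) / n, justified by Abel summation, gives
  K = - sum_n c_n / n with c_n the integral of x^(p-1) cos (2 pi n x). Integration by parts
  gives c_n explicitly as a polynomial in 1/n with coefficients involving (-1)^n, so that
  sum_n c_n / n is a combination of zeta and alternating zeta values at odd arguments.
*)

theory Submission
  imports Defs "HOL-Real_Asymp.Real_Asymp"
begin

lemma zeta_nat_sums:
  assumes "2 \<le> s"
  shows "(\<lambda>k. 1 / real (Suc k) ^ s) sums zeta_nat s"
proof -
  have "summable (\<lambda>k. 1 / real (Suc k) ^ s)"
    using inverse_power_summable[OF assms, where 'a=real]
    by (subst summable_Suc_iff) (simp add: inverse_eq_divide)
  then show ?thesis
    using assms by (simp add: zeta_nat_def summable_sums)
qed

lemma zeta_nat_nonneg: "2 \<le> s \<Longrightarrow> 0 \<le> zeta_nat s"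
  by (rule sums_le[OF _ sums_zero zeta_nat_sums]) auto

lemma alternating_zeta_sums:
  assumes s: "2 \<le> s"
  shows "(\<lambda>k. (-1) ^ k / real (Suc k) ^ s) sums ((1 - 2 / 2 ^ s) * zeta_nat s)"
proof -
  define d where "d k = (1 - (-1) ^ k) / real (Suc k) ^ s" for k
  have d_odd: "d (2 * j + 1) = 2 / 2 ^ s * (1 / real (Suc j) ^ s)" for j
  proof -
    have "real (Suc (2 * j + 1)) ^ s = 2 ^ s * real (Suc j) ^ s"
      by (simp flip: power_mult_distrib)
    then show ?thesis by (simp add: d_def)
  qed
  have "(\<lambda>j. d (2 * j + 1)) sums (2 / 2 ^ s * zeta_nat s)"
    unfolding d_odd by (rule sums_mult[OF zeta_nat_sums[OF s]])
  moreover have "d n = 0" if "n \<notin> range (\<lambda>j. 2 * j + 1)" for n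
    using that by (cases "even n") (auto simp: d_def elim: oddE)
  moreover have "strict_mono (\<lambda>j::nat. 2 * j + 1)"
    by (rule strict_monoI) simp
  ultimately have "d sums (2 / 2 ^ s * zeta_nat s)"
    using sums_mono_reindex by blast
  from sums_diff[OF zeta_nat_sums[OF s] this] show ?thesis
    by (simp add: d_def diff_divide_distrib algebra_simps)
qed

lemma has_integral_power:
  fixes b :: real
  assumes "0 \<le> b"
  shows "((\<lambda>x. x ^ k) has_integral b ^ Suc k / Suc k) {0..b}"
proof -
  have "((\<lambda>x. x ^ Suc k / Suc k) has_real_derivative x ^ k) (at x within {0..b})" for x :: real
    using DERIV_cdivide[OF DERIV_pow[of "Suc k" x], of "Suc k"]
    by (simp add: has_field_derivative_at_within del: of_nat_Suc)
  then show ?thesis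
    using fundamental_theorem_of_calculus[OF assms, of "\<lambda>x. x ^ Suc k / Suc k"]
    by (simp add: has_real_derivative_iff_has_vector_derivative del: of_nat_Suc)
qed

lemma has_integral_power_Suc_by_parts:
  fixes F f :: "real \<Rightarrow> real"
  assumes "0 \<le> b" and F: "\<And>x. (F has_real_derivative f x) (at x)"
    and f: "continuous_on {0..b} f"
    and I: "((\<lambda>x. x ^ q * F x) has_integral I) {0..b}"
  shows "((\<lambda>x. x ^ Suc q * f x) has_integral b ^ Suc q * F b - real (Suc q) * I) {0..b}"
proof -
  have "((\<lambda>x. F x * (real (Suc q) * x ^ q)) has_integral real (Suc q) * I) {0..b}"
    using has_integral_mult_right[OF I, of "real (Suc q)"] by (simp add: mult_ac)
  then have "((\<lambda>x. f x * x ^ Suc q) has_integral b ^ Suc q * F b - real (Suc q) * I) {0..b}"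
    using assms DERIV_isCont[OF F] DERIV_pow[of "Suc q"]
    by (intro integration_by_parts[OF bounded_bilinear_mult, where f = F and g = "\<lambda>x. x ^ Suc q"])
       (auto simp: continuous_at_imp_continuous_on has_real_derivative_iff_has_vector_derivative[symmetric]
             intro!: continuous_intros)
  then show ?thesis by (simp add: mult.commute)
qed

lemma fundamental_theorem_of_calculus_at_right:
  fixes F f :: "real \<Rightarrow> real"
  assumes "a < b" and lim: "(F \<longlongrightarrow> F a) (at_right a)"
    and F: "\<And>x. a < x \<Longrightarrow> x \<le> b \<Longrightarrow> (F has_real_derivative f x) (at x)"
  shows "(f has_integral F b - F a) {a..b}"
proof (rule fundamental_theorem_of_calculus_interior)
  have "isCont F x" if "a < x" "x \<le> b" for x
    using DERIV_isCont[OF F[OF that]] .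
  then show "continuous_on {a..b} F"
    using lim \<open>a < b\<close> by (intro continuous_on_IccI) (auto simp: isCont_def filterlim_at_split)
  show "(F has_vector_derivative f x) (at x)" if "x \<in> {a<..<b}" for x
    using F[of x] that by (simp add: has_real_derivative_iff_has_vector_derivative)
qed (use \<open>a < b\<close> in auto)

lemma has_integral_power_mult_ln:
  fixes b c :: real and p :: nat
  assumes p: "1 \<le> p" and b: "0 < b" and c: "0 < c"
  shows "((\<lambda>x. x ^ (p - 1) * ln (c * x)) has_integral
           b ^ p / p * ln (c * b) - b ^ p / (real p)\<^sup>2) {0..b}"
proof -
  define F where "F x = x ^ p / p * ln (c * x) - x ^ p / (real p)\<^sup>2" for x :: real
  have power_p: "x ^ p = x * x ^ (p - 1)" for x :: real
    using p by (simp add: power_eq_if)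
  have "((\<lambda>x. x ^ (p - 1) * (x * ln c + x * ln x) / p - x * x ^ (p - 1) / (real p)\<^sup>2)
      \<longlongrightarrow> 0 ^ (p - 1) * (0 * ln c + 0) / p - 0 * 0 ^ (p - 1) / (real p)\<^sup>2) (at_right 0)"
    by (intro tendsto_intros) (real_asymp | use p in simp)+
  then have "((\<lambda>x. x ^ (p - 1) * (x * ln c + x * ln x) / p - x * x ^ (p - 1) / (real p)\<^sup>2)
      \<longlongrightarrow> 0) (at_right 0)"
    by simp
  moreover have "eventually (\<lambda>x. x ^ (p - 1) * (x * ln c + x * ln x) / p - x * x ^ (p - 1) / (real p)\<^sup>2 = F x)
      (at_right 0)"
    using eventually_at_right_less[of 0]
    by eventually_elim (use c in \<open>simp add: F_def power_p ln_mult algebra_simps\<close>)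
  ultimately have "(F \<longlongrightarrow> 0) (at_right 0)"
    by (rule Lim_transform_eventually)
  moreover have "F 0 = 0"
    using p by (simp add: F_def)
  ultimately have "(F \<longlongrightarrow> F 0) (at_right 0)"
    by simp
  moreover have "(F has_real_derivative x ^ (p - 1) * ln (c * x)) (at x)" if "0 < x" for x
  proof -
    have "(F has_real_derivative
        p * x ^ (p - 1) / p * ln (c * x) + x ^ p / p * (1 / x) - p * x ^ (p - 1) / (real p)\<^sup>2) (at x)"
      unfolding F_def[abs_def] using that c p
      by (auto intro!: derivative_eq_intros simp: field_simps)
    moreover have "p * x ^ (p - 1) / p * ln (c * x) + x ^ p / p * (1 / x) - p * x ^ (p - 1) / (real p)\<^sup>2
        = x ^ (p - 1) * ln (c * x)"
      using that p by (simp add: power_p field_simps power2_eq_square)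
    ultimately show ?thesis by simp
  qed
  ultimately have "((\<lambda>x. x ^ (p - 1) * ln (c * x)) has_integral F b - F 0) {0..b}"
    using b by (intro fundamental_theorem_of_calculus_at_right) auto
  then show ?thesis
    unfolding \<open>F 0 = 0\<close> diff_zero by (simp only: F_def)
qed

lemma has_integral_suminf_nonneg:
  fixes f :: "nat \<Rightarrow> 'a::euclidean_space \<Rightarrow> real"
  assumes f: "\<And>n. (f n has_integral a n) S" and nonneg: "\<And>n x. x \<in> S \<Longrightarrow> 0 \<le> f n x"
    and sums: "\<And>x. x \<in> S \<Longrightarrow> (\<lambda>n. f n x) sums g x" and "summable a"
  shows "(g has_integral suminf a) S"
proof (rule has_integral_monotone_convergence_increasing)
  show "((\<lambda>x. \<Sum>n<N. f n x) has_integral (\<Sum>n<N. a n)) S" for N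
    using f by (intro has_integral_sum) auto
  show "(\<lambda>x. \<Sum>n<N. f n x) x \<le> (\<lambda>x. \<Sum>n<Suc N. f n x) x" if "x \<in> S" for N x
    using nonneg[OF that] by simp
  show "(\<lambda>N. (\<lambda>x. \<Sum>n<N. f n x) x) \<longlonglongrightarrow> g x" if "x \<in> S" for x
    using sums[OF that] by (simp add: sums_def)
  show "(\<lambda>N. \<Sum>n<N. a n) \<longlonglongrightarrow> suminf a"
    using \<open>summable a\<close> by (simp add: summable_LIMSEQ)
qed

lemma has_integral_suminf_uniform:
  fixes f :: "nat \<Rightarrow> real \<Rightarrow> real"
  assumes cont: "\<And>n. continuous_on {a..b} (f n)"
    and bound: "\<And>n x. x \<in> {a..b} \<Longrightarrow> norm (f n x) \<le> M n" and "summable M"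
  shows "((\<lambda>x. \<Sum>n. f n x) has_integral (\<Sum>n. integral {a..b} (f n))) {a..b}"
proof -
  have "uniform_limit {a..b} (\<lambda>N x. \<Sum>n<N. f n x) (\<lambda>x. \<Sum>n. f n x) sequentially"
    using bound \<open>summable M\<close> by (intro Weierstrass_m_test) auto
  moreover have "continuous_on {a..b} (\<lambda>x. \<Sum>n<N. f n x)" for N
    using cont by (intro continuous_intros)
  ultimately obtain I J where I: "\<And>N. ((\<lambda>x. \<Sum>n<N. f n x) has_integral I N) {a..b}"
      and J: "((\<lambda>x. \<Sum>n. f n x) has_integral J) {a..b}" and "I \<longlonglongrightarrow> J"
    by (rule uniform_limit_integral) auto
  have "I = (\<lambda>N. \<Sum>n<N. integral {a..b} (f n))"
    using cont by (intro ext has_integral_unique[OF I] has_integral_sum integrable_integral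
        integrable_continuous_interval) auto
  with \<open>I \<longlonglongrightarrow> J\<close> have "J = (\<Sum>n. integral {a..b} (f n))"
    by (simp add: sums_def sums_unique)
  with J show ?thesis
    by simp
qed

(* p times the integral of x^(p-1) cos (a x) over [0, b], provided sin (a b) = 0 *)
definition cos_moment :: "real \<Rightarrow> real \<Rightarrow> nat \<Rightarrow> real" where
  "cos_moment a b p =
     cos (a * b) * (\<Sum>l = 1..p div 2.
                      (-1) ^ (l + 1) * fact p / fact (p - 2 * l) * b ^ (p - 2 * l) / a ^ (2 * l))
     + (if even p then (-1) ^ (p div 2) * fact p / a ^ p else 0)"

lemma cos_moment_Suc_Suc:
  assumes "a \<noteq> 0"
  shows "cos_moment a b (p + 2)
    = (real p + 2) * (real p + 1) / a ^ 2 * (b ^ p * cos (a * b) - cos_moment a b p)"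
proof -
  define c where "c = (real p + 2) * (real p + 1) / a ^ 2"
  define t where "t q l = (-1) ^ (l + 1) * fact q / fact (q - 2 * l) * b ^ (q - 2 * l) / a ^ (2 * l)"
    for q l :: nat
  have fact_p2: "fact (p + 2) = (p + 2) * (p + 1) * (fact p :: real)"
    by (simp add: algebra_simps)
  have t1: "t (p + 2) 1 = c * b ^ p"
    using assms by (simp add: t_def c_def fact_p2 power2_eq_square field_simps)
  have tSuc: "t (p + 2) (Suc l) = - c * t p l" if "l \<le> p div 2" for l
  proof -
    have "p + 2 - 2 * Suc l = p - 2 * l" using that by simp
    then show ?thesis using assms by (simp add: t_def c_def fact_p2 field_simps power2_eq_square)
  qed
  have "(\<Sum>l = 1..(p + 2) div 2. t (p + 2) l) = t (p + 2) 1 + (\<Sum>l = 1..p div 2. t (p + 2) (Suc l))"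
    by (simp add: sum.atLeast_Suc_atMost sum.shift_bounds_cl_Suc_ivl del: sum.cl_ivl_Suc)
  also have "\<dots> = c * b ^ p + (\<Sum>l = 1..p div 2. - c * t p l)"
    using t1 tSuc by (intro arg_cong2[where f = "(+)"] sum.cong) auto
  also have "\<dots> = c * b ^ p - c * (\<Sum>l = 1..p div 2. t p l)"
    by (simp add: sum_distrib_left sum_negf)
  finally have sum_eq:
    "(\<Sum>l = 1..(p + 2) div 2. t (p + 2) l) = c * b ^ p - c * (\<Sum>l = 1..p div 2. t p l)" .
  have top_eq: "(if even (p + 2) then (-1) ^ ((p + 2) div 2) * fact (p + 2) / a ^ (p + 2) else 0)
      = - c * (if even p then (-1) ^ (p div 2) * fact p / a ^ p else 0 :: real)"
    using assms by (simp add: c_def fact_p2 field_simps power2_eq_square)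
  have "cos_moment a b (p + 2) = c * (b ^ p * cos (a * b) - cos_moment a b p)"
    unfolding cos_moment_def t_def[symmetric] sum_eq top_eq by (simp add: algebra_simps)
  then show ?thesis by (simp only: c_def)
qed

lemma has_integral_power_mult_cos_Suc:
  fixes a b S :: real
  assumes a: "a \<noteq> 0" and b: "0 \<le> b" and sin_ab: "sin (a * b) = 0"
    and S: "((\<lambda>x. x ^ q * sin (a * x)) has_integral S) {0..b}"
  shows "((\<lambda>x. x ^ Suc q * cos (a * x)) has_integral - (real (Suc q) * S / a)) {0..b}"
proof -
  have "((\<lambda>x. sin (a * x) / a) has_real_derivative cos (a * x)) (at x)" for x
    using a by (auto intro!: derivative_eq_intros)
  moreover have "((\<lambda>x. x ^ q * (sin (a * x) / a)) has_integral S / a) {0..b}"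
    using has_integral_divide[OF S, of a] by (simp add: times_divide_eq_right)
  ultimately have "((\<lambda>x. x ^ Suc q * cos (a * x)) has_integral
      b ^ Suc q * (sin (a * b) / a) - real (Suc q) * (S / a)) {0..b}"
    using b by (intro has_integral_power_Suc_by_parts continuous_intros)
  then show ?thesis
    using sin_ab by simp
qed

lemma has_integral_power_mult_sin_Suc:
  fixes a b C :: real
  assumes a: "a \<noteq> 0" and b: "0 \<le> b"
    and C: "((\<lambda>x. x ^ q * cos (a * x)) has_integral C) {0..b}"
  shows "((\<lambda>x. x ^ Suc q * sin (a * x)) has_integral
           (real (Suc q) * C - b ^ Suc q * cos (a * b)) / a) {0..b}"
proof -
  have "((\<lambda>x. - cos (a * x) / a) has_real_derivative sin (a * x)) (at x)" for x
    using a by (auto intro!: derivative_eq_intros)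
  moreover have "((\<lambda>x. x ^ q * (- cos (a * x) / a)) has_integral - C / a) {0..b}"
    using has_integral_divide[OF has_integral_neg[OF C], of a] by simp
  ultimately have "((\<lambda>x. x ^ Suc q * sin (a * x)) has_integral
      b ^ Suc q * (- cos (a * b) / a) - real (Suc q) * (- C / a)) {0..b}"
    using b by (intro has_integral_power_Suc_by_parts continuous_intros)
  then show ?thesis
    by (simp add: diff_divide_distrib)
qed

lemma has_integral_power_mult_cos:
  fixes a b :: real
  assumes a: "a \<noteq> 0" and b: "0 \<le> b" and sin_ab: "sin (a * b) = 0"
  shows "((\<lambda>x. x ^ q * cos (a * x)) has_integral cos_moment a b (Suc q) / real (Suc q)) {0..b}"
proof (induction q rule: nat_induct2)
  case 0
  have "((\<lambda>x. sin (a * x) / a) has_real_derivative cos (a * x)) (at x within {0..b})" for x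
    using a by (auto intro!: derivative_eq_intros)
  then have "((\<lambda>x. cos (a * x)) has_integral 0) {0..b}"
    using fundamental_theorem_of_calculus[OF b, of "\<lambda>x. sin (a * x) / a"] sin_ab
    by (simp add: has_real_derivative_iff_has_vector_derivative)
  then show ?case
    by (simp add: cos_moment_def)
next
  case 1
  have "((\<lambda>x. - cos (a * x) / a) has_real_derivative sin (a * x)) (at x within {0..b})" for x
    using a by (auto intro!: derivative_eq_intros)
  then have "((\<lambda>x. x ^ 0 * sin (a * x)) has_integral (1 - cos (a * b)) / a) {0..b}"
    using fundamental_theorem_of_calculus[OF b, of "\<lambda>x. - cos (a * x) / a"]
    by (simp add: has_real_derivative_iff_has_vector_derivative diff_divide_distrib)
  moreover have "cos_moment a b (Suc 1) / real (Suc 1) = - (real (Suc 0) * ((1 - cos (a * b)) / a) / a)"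
    using a by (simp add: cos_moment_def field_simps power2_eq_square)
  ultimately show ?case
    using has_integral_power_mult_cos_Suc[OF a b sin_ab] by (simp only: One_nat_def)
next
  case (step q)
  have "real (Suc q) * (cos_moment a b (Suc q) / real (Suc q)) = cos_moment a b (Suc q)"
    by simp
  then have "((\<lambda>x. x ^ Suc q * sin (a * x)) has_integral
      (cos_moment a b (Suc q) - b ^ Suc q * cos (a * b)) / a) {0..b}"
    using has_integral_power_mult_sin_Suc[OF a b step] by metis
  moreover have "cos_moment a b (Suc (Suc (Suc q))) / real (Suc (Suc (Suc q)))
      = - (real (Suc (Suc q)) * ((cos_moment a b (Suc q) - b ^ Suc q * cos (a * b)) / a) / a)"
    using cos_moment_Suc_Suc[OF a, where p = "Suc q" and b = b] a by (simp add: field_simps power2_eq_square)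
  ultimately show ?case
    unfolding add_2_eq_Suc' using has_integral_power_mult_cos_Suc[OF a b sin_ab] by metis
qed

lemma cos_moment_half_period:
  fixes k p :: nat
  defines "N \<equiv> real (Suc k)"
  shows "2 ^ p * cos_moment (2 * pi * N) (1 / 2) p / N =
     (\<Sum>l = 1..p div 2.
        fact p * (-1) ^ l / (fact (p - 2 * l) * pi ^ (2 * l)) * ((-1) ^ k / N ^ (2 * l + 1)))
     + (if even p then fact p * (-1) ^ (p div 2) / pi ^ p else 0) * (1 / N ^ (p + 1))"
proof -
  have N: "N > 0" by (simp add: N_def)
  have cos_N: "cos (2 * pi * N * (1 / 2)) = (-1) ^ Suc k"
    by (simp add: N_def algebra_simps cos_int_times_real)
  have four: "(2 :: real) ^ p * (1 / 2) ^ (p - 2 * l) = 2 ^ (2 * l)" if "2 * l \<le> p" for l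
    using that by (simp add: power_diff power_divide)
  have summand: "2 ^ p * ((-1) ^ Suc k * ((-1) ^ (l + 1) * fact p / fact (p - 2 * l) * (1 / 2) ^ (p - 2 * l)
        / (2 * pi * N) ^ (2 * l))) / N
      = fact p * (-1) ^ l / (fact (p - 2 * l) * pi ^ (2 * l)) * ((-1) ^ k / N ^ (2 * l + 1))"
    if "l \<in> {1..p div 2}" for l
  proof -
    have "2 * l \<le> p" using that by auto
    then have "2 ^ p * (1 / 2) ^ (p - 2 * l) / (2 * pi * N) ^ (2 * l)
        = (1 :: real) / (pi ^ (2 * l) * N ^ (2 * l))"
      using four[of l] by (simp add: power_mult_distrib)
    then show ?thesis using N by (simp add: field_simps power_add)
  qed
  have top: "2 ^ p * (if even p then (-1) ^ (p div 2) * fact p / (2 * pi * N) ^ p else 0) / N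
      = (if even p then fact p * (-1) ^ (p div 2) / pi ^ p else 0) * (1 / N ^ (p + 1))"
    using N by (simp add: power_mult_distrib field_simps)
  show ?thesis
    unfolding cos_moment_def cos_N distrib_left add_divide_distrib sum_distrib_left sum_divide_distrib top
    by (intro arg_cong2[where f = "(+)"] sum.cong refl summand)
qed

definition odd_zeta_terms :: "nat \<Rightarrow> real" where
  "odd_zeta_terms p =
     (\<Sum>k = 1..p div 2. fact p * (-1) ^ k * (4 ^ k - 1) * zeta_nat (2 * k + 1)
                         / (fact (p - 2 * k) * (2 * pi) ^ (2 * k)))
     + (if even p then fact p * (-1) ^ (p div 2) * zeta_nat (p + 1) / pi ^ p else 0)"

lemma cos_moment_half_period_sums:
  fixes p :: nat
  assumes p: "1 \<le> p"
  shows "(\<lambda>n. 2 ^ p * cos_moment (2 * pi * real n) (1 / 2) p / real n) sums odd_zeta_terms p"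
proof -
  define \<alpha> where "\<alpha> l = fact p * (-1) ^ l / (fact (p - 2 * l) * pi ^ (2 * l))" for l :: nat
  define \<beta> :: real where "\<beta> = (if even p then fact p * (-1) ^ (p div 2) / pi ^ p else 0)"
  have "(\<lambda>k. (\<Sum>l = 1..p div 2. \<alpha> l * ((-1) ^ k / real (Suc k) ^ (2 * l + 1)))
      + \<beta> * (1 / real (Suc k) ^ (p + 1)))
      sums ((\<Sum>l = 1..p div 2. \<alpha> l * ((1 - 2 / 2 ^ (2 * l + 1)) * zeta_nat (2 * l + 1)))
        + \<beta> * zeta_nat (p + 1))"
    using p by (intro sums_add sums_sum sums_mult alternating_zeta_sums zeta_nat_sums) auto
  also have "(\<Sum>l = 1..p div 2. \<alpha> l * ((1 - 2 / 2 ^ (2 * l + 1)) * zeta_nat (2 * l + 1)))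
        + \<beta> * zeta_nat (p + 1) = odd_zeta_terms p"
    unfolding odd_zeta_terms_def
  proof (intro arg_cong2[where f = "(+)"] sum.cong refl)
    fix l :: nat
    have "(2 :: real) ^ (2 * l + 1) = 2 * 4 ^ l" "(2 * pi) ^ (2 * l) = 4 ^ l * pi ^ (2 * l)"
      by (simp_all add: power_mult power_mult_distrib)
    then show "\<alpha> l * ((1 - 2 / 2 ^ (2 * l + 1)) * zeta_nat (2 * l + 1)) =
        fact p * (-1) ^ l * (4 ^ l - 1) * zeta_nat (2 * l + 1) / (fact (p - 2 * l) * (2 * pi) ^ (2 * l))"
      by (simp add: \<alpha>_def field_simps)
  qed (simp add: \<beta>_def)
  finally have "(\<lambda>k. 2 ^ p * cos_moment (2 * pi * real (Suc k)) (1 / 2) p / real (Suc k))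
      sums odd_zeta_terms p"
    by (simp only: cos_moment_half_period \<alpha>_def \<beta>_def)
  then show ?thesis
    by (subst (asm) sums_Suc_iff) simp
qed

lemma summable_abs_cos_moment_half_period:
  fixes p :: nat
  assumes p: "1 \<le> p"
  shows "summable (\<lambda>n. \<bar>2 ^ p * cos_moment (2 * pi * real n) (1 / 2) p / real n\<bar>)"
proof -
  define H where "H k = (\<Sum>l = 1..p div 2. \<bar>fact p * (-1) ^ l / (fact (p - 2 * l) * pi ^ (2 * l))\<bar>
      * (1 / real (Suc k) ^ (2 * l + 1))) + \<bar>if even p then fact p * (-1) ^ (p div 2) / pi ^ p else 0\<bar>
      * (1 / real (Suc k) ^ (p + 1))" for k
  have "summable H"
    unfolding H_def using p
    by (intro summable_add summable_sum summable_mult sums_summable[OF zeta_nat_sums]) auto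
  moreover have "norm \<bar>2 ^ p * cos_moment (2 * pi * real (Suc k)) (1 / 2) p / real (Suc k)\<bar> \<le> H k" for k
    unfolding cos_moment_half_period real_norm_def abs_abs H_def
    by (rule order_trans[OF abs_triangle_ineq add_mono[OF order_trans[OF sum_abs sum_mono]]])
       (auto simp: abs_mult)
  ultimately have "summable (\<lambda>k. \<bar>2 ^ p * cos_moment (2 * pi * real (Suc k)) (1 / 2) p / real (Suc k)\<bar>)"
    by (rule summable_comparison_test'[where N = 0])
  then show ?thesis
    by (subst summable_Suc_iff[symmetric])
qed

lemma ln_series_cos:
  fixes r t :: real
  assumes "0 \<le> r" "r < 1"
  shows "(\<lambda>n. - (r ^ n * cos (real n * t)) / real n) sums (ln (1 - 2 * r * cos t + r\<^sup>2) / 2)"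
proof -
  define w where "w = complex_of_real r * cis t"
  have norm_w: "cmod w = r"
    using assms by (simp add: w_def norm_mult)
  then have "w \<noteq> 1" using assms by auto
  have "(cmod (1 - w))\<^sup>2 = (1 - r * cos t)\<^sup>2 + (r * sin t)\<^sup>2"
    by (simp add: cmod_power2 w_def)
  also have "\<dots> = 1 - 2 * r * cos t + r\<^sup>2 * ((sin t)\<^sup>2 + (cos t)\<^sup>2)"
    by algebra
  finally have "ln (1 - 2 * r * cos t + r\<^sup>2) = ln ((cmod (1 - w))\<^sup>2)"
    by simp
  then have "Re (ln (1 - w)) = ln (1 - 2 * r * cos t + r\<^sup>2) / 2"
    using \<open>w \<noteq> 1\<close> by (simp add: ln_realpow)
  moreover have "(\<lambda>n. Re (- (w ^ n) / of_nat n)) sums Re (ln (1 - w))"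
    using Ln_series'[of "- w"] norm_w assms by (intro sums_Re) simp
  moreover have "(\<lambda>n. Re (- (w ^ n) / of_nat n)) = (\<lambda>n. - (r ^ n * cos (real n * t)) / real n)"
    by (simp add: fun_eq_iff w_def power_mult_distrib Complex.DeMoivre Re_divide_of_nat)
  ultimately show ?thesis by metis
qed

(* 1 - 2 r cos t + r^2 = |1 - r e^(i t)|^2; for r < 1 the cosine series of its logarithm
   converges uniformly. *)
lemma has_integral_weighted_abel_kernel:
  fixes w :: "real \<Rightarrow> real" and a b r :: real
  assumes w: "continuous_on {a..b} w" and r: "0 \<le> r" "r < 1"
  shows "((\<lambda>x. w x * (ln (1 - 2 * r * cos (2 * pi * x) + r\<^sup>2) / 2)) has_integral
           (\<Sum>n. r ^ n * - (integral {a..b} (\<lambda>x. w x * cos (2 * pi * real n * x)) / n))) {a..b}"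
proof -
  obtain M where M: "\<And>x. x \<in> {a..b} \<Longrightarrow> \<bar>w x\<bar> \<le> M"
    using continuous_on_compact_bound[OF compact_Icc w] by auto
  define f where "f n x = r ^ n * - (w x * cos (2 * pi * real n * x) / n)" for n x
  have "norm (f n x) \<le> r ^ n * M" if "x \<in> {a..b}" for n x
  proof -
    have "\<bar>w x * cos (2 * pi * real n * x)\<bar> / n \<le> \<bar>w x * cos (2 * pi * real n * x)\<bar>"
      by (cases "n = 0") (simp_all add: divide_le_eq mult_le_cancel_left1)
    also have "\<dots> \<le> M * 1"
      unfolding abs_mult using M[OF that] by (intro mult_mono) auto
    finally have "r ^ n * (\<bar>w x * cos (2 * pi * real n * x)\<bar> / n) \<le> r ^ n * M"
      using r by (intro mult_left_mono) auto
    then show ?thesis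
      using r by (simp add: f_def abs_mult)
  qed
  moreover have "summable (\<lambda>n. r ^ n * M)"
    using r by (intro summable_mult2 summable_geometric) auto
  moreover have "continuous_on {a..b} (f n)" for n
    unfolding f_def divide_inverse by (intro continuous_intros w)
  ultimately have "((\<lambda>x. \<Sum>n. f n x) has_integral (\<Sum>n. integral {a..b} (f n))) {a..b}"
    by (intro has_integral_suminf_uniform)
  moreover have "integral {a..b} (f n)
      = r ^ n * - (integral {a..b} (\<lambda>x. w x * cos (2 * pi * real n * x)) / n)" for n
    unfolding f_def
    by (intro integral_unique has_integral_mult_right has_integral_neg has_integral_divide integrable_integral
        integrable_continuous_interval continuous_intros w)
  moreover have "(\<lambda>x. \<Sum>n. f n x) = (\<lambda>x. w x * (ln (1 - 2 * r * cos (2 * pi * x) + r\<^sup>2) / 2))"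
  proof
    fix x
    show "(\<Sum>n. f n x) = w x * (ln (1 - 2 * r * cos (2 * pi * x) + r\<^sup>2) / 2)"
      using sums_mult[OF ln_series_cos[OF r, of "2 * pi * x"], of "w x"]
      by (simp add: f_def sums_iff mult_ac)
  qed
  ultimately show ?thesis
    by simp
qed

lemma tendsto_abel_abs_summable:
  fixes a r :: "nat \<Rightarrow> real"
  assumes a: "summable (\<lambda>n. \<bar>a n\<bar>)" and r: "\<And>j. 0 \<le> r j" "\<And>j. r j \<le> 1" "r \<longlonglongrightarrow> 1"
  shows "(\<lambda>j. \<Sum>n. r j ^ n * a n) \<longlonglongrightarrow> (\<Sum>n. a n)"
proof -
  have lim: "(\<lambda>j. r j ^ n * a n) \<longlonglongrightarrow> a n" for n
    using tendsto_mult_right[OF tendsto_power[OF r(3), of n], of "a n"] by simp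
  have "\<forall>\<^sub>F (n, j) in sequentially \<times>\<^sub>F sequentially. norm (r j ^ n * a n) \<le> \<bar>a n\<bar>"
    using r by (intro always_eventually) (auto simp: abs_mult power_le_one mult_left_le_one_le)
  from tannerys_theorem[OF lim this a trivial_limit_sequentially] show ?thesis
    by blast
qed

lemma half_le_sin:
  fixes t :: real
  assumes t: "0 \<le> t" "t \<le> pi / 2"
  shows "t / 2 \<le> sin t"
proof -
  have "\<bar>sin t - (\<Sum>m<3. sin_coeff m * t ^ m)\<bar> \<le> inverse (fact 3) * \<bar>t\<bar> ^ 3"
    by (rule Maclaurin_sin_bound)
  moreover have "(\<Sum>m<3. sin_coeff m * t ^ m) = t"
    by (simp add: sin_coeff_def eval_nat_numeral)
  moreover have "t\<^sup>2 \<le> 3"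
  proof -
    have "t\<^sup>2 \<le> (pi / 2)\<^sup>2" using t by (intro power_mono) auto
    also have "\<dots> \<le> 3"
      using pi_approx mult_mono[of pi "3.2" pi "3.2"] by (simp add: power2_eq_square)
    finally show ?thesis .
  qed
  then have "t * t\<^sup>2 \<le> t * 3"
    using t by (intro mult_left_mono) auto
  then have "inverse (fact 3) * \<bar>t\<bar> ^ 3 \<le> t / 2"
    using t by (simp add: eval_nat_numeral power2_eq_square)
  ultimately show ?thesis by linarith
qed

lemma abel_kernel_ge_square:
  fixes r x :: real
  assumes r: "0 \<le> r" and x: "0 < x" "x \<le> 1 / 2"
  shows "x\<^sup>2 \<le> 1 - 2 * r * cos (2 * pi * x) + r\<^sup>2"
proof (cases "x \<le> 1 / 4")
  case True
  define t where "t = 2 * pi * x"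
  have "x \<le> t / 2" "0 \<le> t" "t \<le> pi / 2"
    using x True pi_ge_two by (auto simp: t_def)
  then have "x \<le> sin t"
    using half_le_sin[of t] by linarith
  then have "x\<^sup>2 \<le> (sin t)\<^sup>2"
    using x by (intro power_mono) auto
  moreover have "1 - 2 * r * cos t + r\<^sup>2 = (r - cos t)\<^sup>2 + (sin t)\<^sup>2"
    using sin_cos_squared_add[of t] by algebra
  ultimately show ?thesis
    using zero_le_power2[of "r - cos t"] unfolding t_def by linarith
next
  case False
  have "0 \<le> cos (pi - 2 * pi * x)"
    using False x by (intro cos_ge_zero) (auto simp: field_simps)
  then have "r * cos (2 * pi * x) \<le> 0"
    using r by (simp add: mult_nonneg_nonpos)
  moreover have "x\<^sup>2 \<le> 1"
    using x by (simp add: power_le_one)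
  ultimately show ?thesis
    using zero_le_power2[of r] by linarith
qed

lemma abs_ln_abel_kernel_le:
  fixes r x :: real
  assumes r: "0 \<le> r" "r \<le> 1" and x: "0 < x" "x \<le> 1 / 2"
  shows "\<bar>ln (1 - 2 * r * cos (2 * pi * x) + r\<^sup>2)\<bar> \<le> - 2 * ln x"
proof -
  define \<rho> where "\<rho> = 1 - 2 * r * cos (2 * pi * x) + r\<^sup>2"
  have lower: "x\<^sup>2 \<le> \<rho>"
    unfolding \<rho>_def using r(1) x by (rule abel_kernel_ge_square)
  have "\<rho> \<le> 4"
    using mult_left_mono[OF cos_ge_minus_one[of "2 * pi * x"] r(1)] power_le_one[OF r, of 2] r
    unfolding \<rho>_def by linarith
  also have "4 \<le> 1 / x\<^sup>2"
    using x power_le_one[of "2 * x" 2] by (simp add: field_simps power2_eq_square)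
  finally have upper: "\<rho> \<le> 1 / x\<^sup>2" .
  have "0 < x\<^sup>2"
    using x by simp
  then have "ln (x\<^sup>2) \<le> ln \<rho>" "ln \<rho> \<le> ln (1 / x\<^sup>2)"
    using lower upper by (auto intro!: ln_mono order.strict_trans2[OF _ lower])
  moreover have "ln (x\<^sup>2) = 2 * ln x" "ln (1 / x\<^sup>2) = - 2 * ln x"
    using x by (simp_all add: ln_realpow ln_div)
  ultimately show ?thesis
    by (simp add: \<rho>_def)
qed

lemma tendsto_ln_abel_kernel:
  fixes r :: "nat \<Rightarrow> real" and x :: real
  assumes "r \<longlonglongrightarrow> 1" and x: "0 < x" "x < 1"
  shows "(\<lambda>j. ln (1 - 2 * r j * cos (2 * pi * x) + (r j)\<^sup>2) / 2) \<longlonglongrightarrow> ln (2 * sin (pi * x))"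
proof -
  have "0 < sin (pi * x)"
    using x by (intro sin_gt_zero) auto
  have kernel_1: "1 - 2 * 1 * cos (2 * pi * x) + 1\<^sup>2 = (2 * sin (pi * x))\<^sup>2"
    using cos_double_sin[of "pi * x"] by (simp add: power_mult_distrib mult.assoc)
  then have "(\<lambda>j. ln (1 - 2 * r j * cos (2 * pi * x) + (r j)\<^sup>2) / 2)
      \<longlonglongrightarrow> ln (1 - 2 * 1 * cos (2 * pi * x) + 1\<^sup>2) / 2"
    using \<open>r \<longlonglongrightarrow> 1\<close> \<open>0 < sin (pi * x)\<close> by (intro tendsto_intros) auto
  also have "ln (1 - 2 * 1 * cos (2 * pi * x) + 1\<^sup>2) / 2 = ln (2 * sin (pi * x))"
    unfolding kernel_1 using \<open>0 < sin (pi * x)\<close> by (subst ln_realpow) auto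
  finally show ?thesis .
qed

(* Abel summation with r -> 1: dominated convergence on the integrals, Tannery's theorem on the series. *)
lemma has_integral_weighted_ln_2sin:
  fixes w :: "real \<Rightarrow> real"
  defines "c \<equiv> \<lambda>n. integral {0..1/2} (\<lambda>x. w x * cos (2 * pi * real n * x))"
  assumes w: "continuous_on {0..1/2} w" and summable: "summable (\<lambda>n. \<bar>c n / n\<bar>)"
  shows "((\<lambda>x. w x * ln (2 * sin (pi * x))) has_integral (\<Sum>n. - (c n / n))) {0..1/2}"
proof -
  obtain M where "0 \<le> M" and M: "\<And>x. x \<in> {0..1/2} \<Longrightarrow> \<bar>w x\<bar> \<le> M"
    using continuous_on_compact_bound[OF compact_Icc w] by auto
  define r where "r j = 1 - 1 / (real j + 2)" for j :: nat
  have r: "0 \<le> r j" "r j < 1" for j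
    by (auto simp: r_def field_simps)
  have "r \<longlonglongrightarrow> 1"
    unfolding r_def by real_asymp
  \<comment> \<open>Modified at 0, where the dominating function \<open>- M * ln x\<close> vanishes because \<open>ln 0 = 0\<close>.\<close>
  define f where "f j x = (if x = 0 then 0 else w x * (ln (1 - 2 * r j * cos (2 * pi * x) + (r j)\<^sup>2) / 2))"
    for j x
  have f_int: "(f j has_integral (\<Sum>n. r j ^ n * - (c n / n))) {0..1/2}" for j
    using has_integral_weighted_abel_kernel[OF w r] unfolding c_def
    by (rule has_integral_spike_finite[of "{0}", rotated 2]) (auto simp: f_def)
  have h_int: "((\<lambda>x. - M * ln x) has_integral - M * (1 / 2 * ln (1 / 2) - 1 / 2)) {0..1/2}"
    using has_integral_mult_right[OF has_integral_power_mult_ln[of 1 "1/2" 1], of "- M"]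
    by (simp add: power2_eq_square)
  have "norm (f j x) \<le> - M * ln x" if "x \<in> {0..1/2}" for j x
  proof (cases "x = 0")
    case False
    with that have "\<bar>ln (1 - 2 * r j * cos (2 * pi * x) + (r j)\<^sup>2)\<bar> \<le> - 2 * ln x"
      using r[of j] by (intro abs_ln_abel_kernel_le) auto
    then have "\<bar>w x\<bar> * \<bar>ln (1 - 2 * r j * cos (2 * pi * x) + (r j)\<^sup>2) / 2\<bar> \<le> M * (- ln x)"
      using M[OF that] \<open>0 \<le> M\<close> by (intro mult_mono) auto
    then show ?thesis
      using False by (simp add: f_def abs_mult)
  qed (simp add: f_def)
  moreover have "(\<lambda>j. f j x) \<longlonglongrightarrow> w x * ln (2 * sin (pi * x))" if "x \<in> {0..1/2}" for x
    using that tendsto_mult_left[OF tendsto_ln_abel_kernel[OF \<open>r \<longlonglongrightarrow> 1\<close>, of x], of "w x"]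
    by (cases "x = 0") (auto simp: f_def)
  moreover have "(\<lambda>j. \<Sum>n. r j ^ n * - (c n / n)) \<longlonglongrightarrow> (\<Sum>n. - (c n / n))"
    using summable r \<open>r \<longlonglongrightarrow> 1\<close> by (intro tendsto_abel_abs_summable) (auto simp: less_imp_le)
  ultimately show ?thesis
    by (intro has_integral_dominated_convergence[OF f_int has_integral_integrable[OF h_int]]) auto
qed

lemma has_integral_power_mult_ln_2sin:
  fixes p :: nat
  assumes p: "1 \<le> p"
  shows "((\<lambda>x. x ^ (p - 1) * ln (2 * sin (pi * x))) has_integral - (odd_zeta_terms p / (real p * 2 ^ p)))
           {0..1/2}"
proof -
  define c where "c n = integral {0..1/2} (\<lambda>x. x ^ (p - 1) * cos (2 * pi * real n * x))" for n
  define d where "d n = 2 ^ p * cos_moment (2 * pi * real n) (1 / 2) p / real n" for n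
  have c_div: "c n / n = d n / (real p * 2 ^ p)" for n
  proof (cases "n = 0")
    case False
    have "sin (2 * pi * real n * (1 / 2)) = 0"
      by (simp add: sin_zero_iff_int2 mult.commute)
    then have "c n = cos_moment (2 * pi * real n) (1 / 2) p / p"
      using has_integral_power_mult_cos[of "2 * pi * real n" "1/2" "p - 1"] False p
      by (simp add: c_def integral_unique)
    then show ?thesis by (simp add: d_def)
  qed (simp add: d_def)
  have "summable (\<lambda>n. \<bar>c n / n\<bar>)"
    unfolding c_div abs_divide using summable_abs_cos_moment_half_period[OF p]
    by (intro summable_divide) (simp add: d_def)
  then have "((\<lambda>x. x ^ (p - 1) * ln (2 * sin (pi * x))) has_integral (\<Sum>n. - (c n / n))) {0..1/2}"
    unfolding c_def by (intro has_integral_weighted_ln_2sin continuous_intros)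
  moreover have "(\<lambda>n. - (c n / n)) sums - (odd_zeta_terms p / (real p * 2 ^ p))"
    unfolding c_div d_def by (intro sums_minus sums_divide cos_moment_half_period_sums p)
  ultimately show ?thesis
    by (simp add: sums_iff)
qed

lemma sums_swap_nonneg:
  fixes f :: "nat \<Rightarrow> nat \<Rightarrow> real"
  assumes nonneg: "\<And>m n. 0 \<le> f m n"
    and rows: "\<And>m. (\<lambda>n. f m n) sums g m" and g: "g sums s"
    and cols: "\<And>n. (\<lambda>m. f m n) sums h n"
  shows "h sums s"
proof -
  have rows': "((\<lambda>n. f m n) has_sum g m) UNIV" for m
    using rows nonneg by (rule sums_nonneg_imp_has_sum)
  have "0 \<le> g m" for m
    by (rule sums_le[OF _ sums_zero rows]) (rule nonneg)
  then have g': "(g has_sum s) UNIV"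
    using g by (intro sums_nonneg_imp_has_sum)
  have "(\<lambda>(m, n). f m n) summable_on UNIV \<times> UNIV"
    using rows' g' nonneg by (intro summable_on_SigmaI[where g = g]) (auto simp: summable_on_def)
  then have "((\<lambda>(m, n). f m n) has_sum s) (UNIV \<times> UNIV)"
    using rows' g' by (intro has_sum_SigmaI) auto
  then have swapped: "((\<lambda>(n, m). f m n) has_sum s) (UNIV \<times> UNIV)"
    by (subst (asm) has_sum_swap) simp
  have "((\<lambda>m. f m n) has_sum h n) UNIV" for n
    using cols nonneg by (rule sums_nonneg_imp_has_sum)
  then have "(h has_sum s) UNIV"
    by (intro has_sum_SigmaD[OF swapped]) simp
  then show ?thesis
    by (rule has_sum_imp_sums)
qed

lemma sums_ln_sin_product:
  fixes x :: real
  assumes x: "0 < x" "x < 1"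
  shows "(\<lambda>k. - ln (1 - x\<^sup>2 / (real (Suc k))\<^sup>2)) sums - ln (sin (pi * x) / (pi * x))"
proof -
  have "(\<lambda>n. - ln (\<Prod>k=1..n. 1 - x\<^sup>2 / (real k)\<^sup>2)) \<longlonglongrightarrow> - ln (sin (pi * x) / (pi * x))"
  proof (intro tendsto_intros sin_product_formula_real')
    have "0 < sin (pi * x)"
      using x by (intro sin_gt_zero) auto
    then show "sin (pi * x) / (pi * x) \<noteq> 0"
      using x by simp
  qed (use x in auto)
  moreover have "- ln (\<Prod>k=1..n. 1 - x\<^sup>2 / (real k)\<^sup>2)
      = (\<Sum>k<n. - ln (1 - x\<^sup>2 / (real (Suc k))\<^sup>2))" for n
  proof -
    have "x\<^sup>2 < (real (Suc k))\<^sup>2" for k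
      using x by (intro power_strict_mono) auto
    then have "x\<^sup>2 / (real (Suc k))\<^sup>2 < 1" for k
      by (simp add: divide_less_eq)
    then have "ln (\<Prod>k<n. 1 - x\<^sup>2 / (real (Suc k))\<^sup>2)
        = (\<Sum>k<n. ln (1 - x\<^sup>2 / (real (Suc k))\<^sup>2))"
      by (intro ln_prod) (auto simp: less_le)
    then show ?thesis
      by (simp add: prod.atLeast1_atMost_eq sum_negf)
  qed
  ultimately show ?thesis
    by (simp add: sums_def)
qed

lemma ln_sin_div_series:
  fixes x :: real
  assumes x: "0 < x" "x < 1"
  shows "(\<lambda>n. zeta_nat (2 * Suc n) * x ^ (2 * Suc n) / Suc n) sums - ln (sin (pi * x) / (pi * x))"
proof -
  define u where "u k = x\<^sup>2 / (real (Suc k))\<^sup>2" for k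
  have "x\<^sup>2 < (real (Suc k))\<^sup>2" for k
    using x by (intro power_strict_mono) auto
  then have u: "0 \<le> u k" "u k < 1" for k
    by (auto simp: u_def divide_less_eq)
  have rows: "(\<lambda>n. u k ^ Suc n / Suc n) sums - ln (1 - u k)" for k
  proof -
    have "(\<lambda>n. u k ^ n / n) sums - ln (1 - u k)"
      using sums_minus[OF ln_series'[of "- u k"]] u[of k] by simp
    then show ?thesis
      by (subst sums_Suc_iff) simp
  qed
  have cols: "(\<lambda>k. u k ^ Suc n / Suc n) sums (zeta_nat (2 * Suc n) * x ^ (2 * Suc n) / Suc n)" for n
  proof -
    have "u k ^ Suc n = x ^ (2 * Suc n) / real (Suc k) ^ (2 * Suc n)" for k
      unfolding u_def by (simp only: power_divide power_mult)
    then have "u k ^ Suc n / Suc n = x ^ (2 * Suc n) / Suc n * (1 / real (Suc k) ^ (2 * Suc n))" for k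
      by simp
    then show ?thesis
      using sums_mult[OF zeta_nat_sums[of "2 * Suc n"], of "x ^ (2 * Suc n) / Suc n"] by (simp add: mult_ac)
  qed
  have "(\<lambda>k. - ln (1 - u k)) sums - ln (sin (pi * x) / (pi * x))"
    unfolding u_def by (rule sums_ln_sin_product[OF x])
  from sums_swap_nonneg[where f = "\<lambda>k n. u k ^ Suc n / Suc n", OF _ rows this cols] show ?thesis
    by (simp add: u)
qed

(* the integral of x^(p-1) * zeta (2n + 2) x^(2n+2) / (n + 1) over [0, 1/2] *)
definition zeta_moment_term :: "nat \<Rightarrow> nat \<Rightarrow> real" where
  "zeta_moment_term p n =
     zeta_nat (2 * Suc n) * (1 / 2) ^ (2 * Suc n + p) / (real (Suc n) * real (2 * Suc n + p))"

lemma summable_zeta_moment_term: "summable (zeta_moment_term p)"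
  unfolding zeta_moment_term_def
proof (rule summable_comparison_test'[where N = 0])
  show "summable (\<lambda>n. zeta_nat (2 * Suc n) * (1 / 2) ^ (2 * Suc n) / Suc n)"
    using ln_sin_div_series[of "1/2"] by (simp add: sums_summable)
  show "norm (zeta_nat (2 * Suc n) * (1 / 2) ^ (2 * Suc n + p) / (real (Suc n) * real (2 * Suc n + p)))
      \<le> zeta_nat (2 * Suc n) * (1 / 2) ^ (2 * Suc n) / Suc n" for n
  proof -
    have "(1 / 2 :: real) ^ (2 * Suc n + p) / real (2 * Suc n + p) \<le> (1 / 2) ^ (2 * Suc n + p) / 1"
      by (rule divide_left_mono) auto
    also have "\<dots> \<le> (1 / 2) ^ (2 * Suc n)"
      unfolding div_by_1 by (rule power_decreasing) auto
    finally have "zeta_nat (2 * Suc n) * ((1 / 2) ^ (2 * Suc n + p) / real (2 * Suc n + p)) / Suc n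
        \<le> zeta_nat (2 * Suc n) * (1 / 2) ^ (2 * Suc n) / Suc n"
      using zeta_nat_nonneg[of "2 * Suc n"] by (intro divide_right_mono mult_left_mono) auto
    moreover have "norm (zeta_nat (2 * Suc n) * (1 / 2) ^ (2 * Suc n + p) / (real (Suc n) * real (2 * Suc n + p)))
        = zeta_nat (2 * Suc n) * ((1 / 2) ^ (2 * Suc n + p) / real (2 * Suc n + p)) / Suc n"
      using zeta_nat_nonneg[of "2 * Suc n"] by (simp add: mult.commute)
    ultimately show ?thesis
      by simp
  qed
qed

lemma has_integral_power_mult_ln_sin_div:
  fixes p :: nat
  assumes p: "1 \<le> p"
  shows "((\<lambda>x. x ^ (p - 1) * - ln (sin (pi * x) / (pi * x))) has_integral
          (\<Sum>n. zeta_moment_term p n)) {0..1/2}"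
proof (rule has_integral_suminf_nonneg)
  fix n
  have "((\<lambda>x. x ^ (2 * Suc n + p - 1)) has_integral (1 / 2) ^ (2 * Suc n + p) / (2 * Suc n + p)) {0..1/2}"
    using has_integral_power[of "1/2" "2 * Suc n + p - 1"] p by simp
  from has_integral_mult_right[OF this, of "zeta_nat (2 * Suc n) / Suc n"]
  show "((\<lambda>x. x ^ (p - 1) * (zeta_nat (2 * Suc n) * x ^ (2 * Suc n) / Suc n)) has_integral
      zeta_moment_term p n) {0..1/2}"
  proof (rule has_integral_eq_rhs[OF has_integral_eq, rotated])
    have "2 * Suc n + p - 1 = (p - 1) + 2 * Suc n"
      using p by simp
    then show "zeta_nat (2 * Suc n) / Suc n * x ^ (2 * Suc n + p - 1)
        = x ^ (p - 1) * (zeta_nat (2 * Suc n) * x ^ (2 * Suc n) / Suc n)" for x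
      by (simp only: power_add) simp
  qed (simp add: zeta_moment_term_def algebra_simps)
  show "0 \<le> x ^ (p - 1) * (zeta_nat (2 * Suc n) * x ^ (2 * Suc n) / Suc n)" if "x \<in> {0..1/2}" for x
    using that zeta_nat_nonneg[of "2 * Suc n"] by simp
next
  show "(\<lambda>n. x ^ (p - 1) * (zeta_nat (2 * Suc n) * x ^ (2 * Suc n) / Suc n))
      sums (x ^ (p - 1) * - ln (sin (pi * x) / (pi * x)))" if "x \<in> {0..1/2}" for x
  proof (cases "x = 0")
    case False
    with that show ?thesis
      by (intro sums_mult ln_sin_div_series) auto
  qed simp
next
  show "summable (zeta_moment_term p)"
    by (rule summable_zeta_moment_term)
qed

lemma zeta_even_series_split:
  fixes p :: nat
  assumes p: "1 \<le> p"
  shows "(\<Sum>n. zeta_nat (2 * n) / (real (2 * n + p) * 2 ^ (2 * n)))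
    = - 1 / (2 * p) + (ln pi - ln 2) / 2
      - real p * 2 ^ p / 2 * (\<Sum>n. zeta_moment_term p n)"
    (is "_ = _ + _ - _ * ?B")
proof -
  have partial_fractions: "Z * h / m / 2 - P * T / 2 * (Z * k / (m * D)) = Z / (D * Q)"
    if "h = 1 / Q" "k = 1 / Q * (1 / T)" "D = 2 * m + P" "0 < m" "0 < Q" "0 < T" "0 < D"
    for Z h m P T k D Q :: real
    using that(4-7) unfolding that(1,2) by (simp add: field_simps) (simp add: that(3) algebra_simps)
  have "(\<lambda>n. zeta_nat (2 * Suc n) * (1 / 2) ^ (2 * Suc n) / Suc n) sums (ln pi - ln 2)"
    using ln_sin_div_series[of "1/2"] by (simp add: ln_div)
  then have "(\<lambda>n. zeta_nat (2 * Suc n) * (1 / 2) ^ (2 * Suc n) / Suc n / 2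
      - real p * 2 ^ p / 2 * zeta_moment_term p n)
      sums ((ln pi - ln 2) / 2 - real p * 2 ^ p / 2 * ?B)"
    by (intro sums_diff sums_divide sums_mult summable_sums summable_zeta_moment_term)
  also have "(\<lambda>n. zeta_nat (2 * Suc n) * (1 / 2) ^ (2 * Suc n) / Suc n / 2
      - real p * 2 ^ p / 2 * zeta_moment_term p n)
      = (\<lambda>n. zeta_nat (2 * Suc n) / (real (2 * Suc n + p) * 2 ^ (2 * Suc n)))"
    unfolding zeta_moment_term_def
    by (intro ext partial_fractions) (simp_all add: power_add power_one_over)
  finally have "(\<lambda>n. zeta_nat (2 * n) / (real (2 * n + p) * 2 ^ (2 * n)))
      sums ((ln pi - ln 2) / 2 - real p * 2 ^ p / 2 * ?B + zeta_nat 0 / real p)"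
    by (subst (asm) sums_Suc_iff) simp
  moreover have "zeta_nat 0 / real p = - 1 / (2 * p)"
    by (simp add: zeta_nat_def)
  ultimately show ?thesis
    by (simp add: sums_iff)
qed

lemma zeta_moment_term_sum:
  fixes p :: nat
  assumes p: "1 \<le> p"
  shows "real p * 2 ^ p * (\<Sum>n. zeta_moment_term p n)
    = ln pi - 1 / p + odd_zeta_terms p"
proof -
  have "((\<lambda>x. x ^ (p - 1) * ln (2 * pi * x) - x ^ (p - 1) * ln (2 * sin (pi * x))) has_integral
      (1 / 2) ^ p / p * ln pi - (1 / 2) ^ p / (real p)\<^sup>2 + odd_zeta_terms p / (real p * 2 ^ p)) {0..1/2}"
    using has_integral_diff[OF has_integral_power_mult_ln[OF p, of "1/2" "2 * pi"]
        has_integral_power_mult_ln_2sin[OF p]]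
    by simp
  moreover have "x ^ (p - 1) * ln (2 * pi * x) - x ^ (p - 1) * ln (2 * sin (pi * x))
      = x ^ (p - 1) * - ln (sin (pi * x) / (pi * x))" if "x \<in> {0..1/2}" for x
  proof (cases "x = 0")
    case False
    with that have "0 < sin (pi * x)" "0 < x"
      by (auto intro!: sin_gt_zero)
    then show ?thesis
      by (simp add: ln_div ln_mult algebra_simps)
  qed simp
  ultimately have "((\<lambda>x. x ^ (p - 1) * - ln (sin (pi * x) / (pi * x))) has_integral
      (1 / 2) ^ p / p * ln pi - (1 / 2) ^ p / (real p)\<^sup>2 + odd_zeta_terms p / (real p * 2 ^ p)) {0..1/2}"
    by (rule has_integral_eq[rotated])
  from has_integral_unique[OF has_integral_power_mult_ln_sin_div[OF p] this] show ?thesis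
    using p by (simp add: field_simps power2_eq_square power_one_over)
qed

theorem lemma2p6:
  fixes p :: nat
  assumes "p \<ge> 1"
  shows "- 2 * (\<Sum>n. zeta_nat (2 * n) / (real (2 * n + p) * 2 ^ (2 * n)))
         = ln 2
           + (\<Sum>k = 1..p div 2. fact p * (-1) ^ k * (4 ^ k - 1) * zeta_nat (2 * k + 1)
                                 / (fact (p - 2 * k) * (2 * pi) ^ (2 * k)))
           + (if even p then fact p * (-1) ^ (p div 2) * zeta_nat (p + 1) / pi ^ p else 0)"
proof -
  have "- 2 * (\<Sum>n. zeta_nat (2 * n) / (real (2 * n + p) * 2 ^ (2 * n)))
      = 1 / p - (ln pi - ln 2)
        + real p * 2 ^ p * (\<Sum>n. zeta_moment_term p n)"
    unfolding zeta_even_series_split[OF assms] using assms by (simp add: field_simps)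
  also have "\<dots> = ln 2 + odd_zeta_terms p"
    unfolding zeta_moment_term_sum[OF assms] by simp
  finally show ?thesis
    by (simp only: odd_zeta_terms_def add.assoc)
qed

end
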